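(* Let $N, n, p, \ell, K \in \mathbb{N}$ with $n \le N$. For $i = 1, \dots, \ell$ let $\boldsymbol A_i \in \mathbb{R}^{N \times N_i}$ with $N_i = \binom{N+i-1}{i}$, and let $\boldsymbol B \in \mathbb{R}^{N \times p}$. Consider the discrete-time system $$\boldsymbol f(\boldsymbol x, \boldsymbol u) = \sum_{i=1}^{\ell} \boldsymbol A_i \boldsymbol x^i + \boldsymbol B \boldsymbol u, \qquad \boldsymbol x \in \mathbb{R}^N,\ \boldsymbol u \in \mathbb{R}^p.$$ Let $\boldsymbol V_n \in \mathbb{R}^{N \times n}$ have orthonormal columns spanning $\mathcal{V}_n \subset \mathbb{R}^N$. Let $n_i = \binom{n+i-1}{i}$ and define the intrusive reduced operators $\tilde{\boldsymbol B} = \boldsymbol V_n^T \boldsymbol B$ and $\tilde{\boldsymbol A}_i \in \mathbb{R}^{n \times n_i}$ as the unique matrix with $\tilde{\boldsymbol A}_i \boldsymbol y^i = \boldsymbol V_n^T \boldsymbol A_i (\boldsymbol V_n \boldsymbol y)^i$ for all $\boldsymbol y \in \mathbb{R}^n$, $i = 1, \dots, \ell$. Let $\boldsymbol x_0 \in \mathcal{V}_n$ and $\boldsymbol u_0, \dots, \boldsymbol u_{K-1} \in \mathbb{R}^p$, and generate re-projected states $\bar{\boldsymbol x}_0 = \boldsymbol V_n^T \boldsymbol x_0$, $\bar{\boldsymbol x}_{k+1} = \boldsymbol V_n^T \boldsymbol f(\boldsymbol V_n \bar{\boldsymbol x}_k, \boldsymbol u_k)$ for $k = 0, \dots, K-1$.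 Set $\bar{\boldsymbol X} = [\bar{\boldsymbol x}_0, \dots, \bar{\boldsymbol x}_{K-1}]$, $\bar{\boldsymbol Y} = [\bar{\boldsymbol x}_1, \dots, \bar{\boldsymbol x}_K]$, $\bar{\boldsymbol X}^i = [\bar{\boldsymbol x}_0^i, \dots, \bar{\boldsymbol x}_{K-1}^i] \in \mathbb{R}^{n_i \times K}$, and $\boldsymbol U = [\boldsymbol u_0, \dots, \boldsymbol u_{K-1}] \in \mathbb{R}^{p \times K}$. Suppose $$K \ge p + \sum_{i=1}^{\ell} n_i,$$ and consider the data matrix $$\bar{\boldsymbol D} = \begin{bmatrix} \bar{\boldsymbol X} \\ \bar{\boldsymbol X}^2 \\ \vdots \\ \bar{\boldsymbol X}^{\ell} \\ \boldsymbol U \end{bmatrix} \in \mathbb{R}^{(\sum_{i=1}^{\ell} n_i + p) \times K}.$$ If $\bar{\boldsymbol D}$ has full rank, then the least-squares problem $$\min_{\hat{\boldsymbol O} \in \mathbb{R}^{n \times (\sum_{i=1}^{\ell} n_i + p)}} \|\bar{\boldsymbol D}^T \hat{\boldsymbol O}^T - \bar{\boldsymbol Y}^T\|_F^2$$ has a unique solution $\hat{\boldsymbol O}^*$, it attains objective value $0$, and $\hat{\boldsymbol O}^* = [\tilde{\boldsymbol A}_1, \tilde{\boldsymbol A}_2, \dots, \tilde{\boldsymbol A}_{\ell}, \tilde{\boldsymbol B}]$.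
   Context: For a vector $\boldsymbol z \in \mathbb{R}^d$ and $i \in \mathbb{N}$, the $i$-th power $\boldsymbol z^i \in \mathbb{R}^{\binom{d+i-1}{i}}$ is the vector obtained from the $i$-fold Kronecker product $\boldsymbol z \otimes \cdots \otimes \boldsymbol z$ by removing duplicate entries arising from commutativity of multiplication, i.e., it lists each degree-$i$ monomial in the entries of $\boldsymbol z$ exactly once (in a fixed ordering); $\boldsymbol z^1 = \boldsymbol z$. Since these monomials are linearly independent functions, each $\tilde{\boldsymbol A}_i$ is well defined and unique. *)

theory Defs
  imports "Jordan_Normal_Form.DL_Rank"
begin

text \<open>Degree-i monomials in d variables, each listed once as a nondecreasing
  list of variable indices (indices are 0-based), in a fixed ordering.\<close>
fun mons :: "nat \<Rightarrow> nat \<Rightarrow> nat list list" where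
  "mons d 0 = [[]]"
| "mons d (Suc i) =
     concat (map (\<lambda>j. map (\<lambda>m. j # m) (filter (\<lambda>m. \<forall>k\<in>set m. j \<le> k) (mons d i))) [0..<d])"

definition vpow :: "real vec \<Rightarrow> nat \<Rightarrow> real vec" where
  "vpow z i = vec (length (mons (dim_vec z) i))
      (\<lambda>r. prod_list (map (\<lambda>j. z $ j) (mons (dim_vec z) i ! r)))"

definition sysf :: "(nat \<Rightarrow> real mat) \<Rightarrow> real mat \<Rightarrow> nat \<Rightarrow> real vec \<Rightarrow> real vec \<Rightarrow> real vec" where
  "sysf A B l x u = foldr (\<lambda>i acc. A i *\<^sub>v vpow x i + acc) [1..<l+1] (B *\<^sub>v u)"

definition datacol :: "nat \<Rightarrow> real vec \<Rightarrow> real vec \<Rightarrow> real vec" where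
  "datacol l x u = foldr (\<lambda>i acc. vpow x i @\<^sub>v acc) [1..<l+1] u"

definition hcat :: "(nat \<Rightarrow> real mat) \<Rightarrow> nat \<Rightarrow> real mat \<Rightarrow> real mat" where
  "hcat M l C = transpose_mat (foldr (\<lambda>i acc. transpose_mat (M i) @\<^sub>r acc) [1..<l+1] (transpose_mat C))"

definition frob_sq :: "real mat \<Rightarrow> real" where
  "frob_sq M = (\<Sum>i<dim_row M. \<Sum>j<dim_col M. (M $$ (i, j))\<^sup>2)"

definition full_rank :: "real mat \<Rightarrow> bool" where
  "full_rank M \<longleftrightarrow> vec_space.rank (dim_row M) M = min (dim_row M) (dim_col M)"

end

theory Submission
  imports Defs
begin

(* The intrusive operators satisfy At_i y^i = V^T A_i (V y)^i, so every re-projected step obeys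
   the reduced model exactly: xb_(k+1) = Ostar d_k, where d_k is the k-th column of the data
   matrix D and Ostar = [At_1, ..., At_l, V^T B].  Hence Y = Ostar D and the objective vanishes
   at Ostar.  For any other O the residual is the transpose of (O - Ostar) D, and since D has
   full row rank every row of O - Ostar, being orthogonal to a spanning set, is zero. *)

lemma sum_choose_lessThan: "(\<Sum>s<t. (s + i) choose i) = (t + i) choose Suc i"
  by (induction t) simp_all

lemma length_filter_mons_ge:
  "j \<le> d \<Longrightarrow> length (filter (\<lambda>m. \<forall>k\<in>set m. j \<le> k) (mons d i)) = (d - j + i - 1) choose i"
proof (induction i arbitrary: j)
  case 0
  then show ?case by simp
next
  case (Suc i)
  let ?ge = "\<lambda>j m. \<forall>k\<in>set m. j \<le> k"
  have length_filter_Cons: "length (filter (?ge j) (map ((#) j') (filter (?ge j') (mons d i))))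
      = (if j \<le> j' then length (filter (?ge j') (mons d i)) else 0)" for j'
    by (auto simp: filter_map comp_def filter_empty_conv intro!: arg_cong[where f=length] filter_cong)
  have "length (filter (?ge j) (mons d (Suc i)))
      = (\<Sum>j'\<leftarrow>[0..<d]. if j \<le> j' then length (filter (?ge j') (mons d i)) else 0)"
    by (simp only: mons.simps filter_concat length_concat map_map comp_def length_filter_Cons)
  also have "\<dots> = (\<Sum>j'=j..<d. (d - j' + i - 1) choose i)"
  proof -
    have "{0..<d} \<inter> {j'. j \<le> j'} = {j..<d}" by auto
    then show ?thesis
      using Suc.IH by (simp add: interv_sum_list_conv_sum_set_nat sum.If_cases)
  qed
  also have "\<dots> = (\<Sum>s<d - j. (s + i) choose i)"
    using Suc.prems
    by (intro sum.reindex_bij_witness[of _ "\<lambda>s. d - Suc s" "\<lambda>j'. d - Suc j'"]) auto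
  finally show ?case
    using Suc.prems by (simp add: sum_choose_lessThan)
qed

lemma length_mons: "length (mons d i) = (d + i - 1) choose i"
  using length_filter_mons_ge[of 0 d i] by simp

lemma dim_vpow [simp]: "dim_vec (vpow x i) = (dim_vec x + i - 1) choose i"
  by (simp add: vpow_def length_mons)

lemma vpow_carrier: "x \<in> carrier_vec n \<Longrightarrow> vpow x i \<in> carrier_vec ((n + i - 1) choose i)"
  by (intro carrier_vecI) (simp only: dim_vpow carrier_vecD)

lemma col_append_rows:
  assumes "A \<in> carrier_mat nr1 nc" "B \<in> carrier_mat nr2 nc" "j < nc"
  shows "col (A @\<^sub>r B) j = col A j @\<^sub>v col B j"
  using assms unfolding append_rows_def by (subst col_four_block_mat) auto

lemma transpose_append_rows_mult_vec:
  assumes P: "P \<in> carrier_mat a m" and Q: "Q \<in> carrier_mat b m"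
    and v: "v \<in> carrier_vec a" and w: "w \<in> carrier_vec b"
  shows "transpose_mat (P @\<^sub>r Q) *\<^sub>v (v @\<^sub>v w) = transpose_mat P *\<^sub>v v + transpose_mat Q *\<^sub>v w"
proof (rule eq_vecI)
  have PQ: "P @\<^sub>r Q \<in> carrier_mat (a + b) m" using P Q by blast
  fix j
  assume "j < dim_vec (transpose_mat P *\<^sub>v v + transpose_mat Q *\<^sub>v w)"
  then have j: "j < m" using P Q by simp
  have "(transpose_mat (P @\<^sub>r Q) *\<^sub>v (v @\<^sub>v w)) $ j = col (P @\<^sub>r Q) j \<bullet> (v @\<^sub>v w)"
    using PQ j by simp
  also have "\<dots> = col P j \<bullet> v + col Q j \<bullet> w"
    using P Q v w j by (simp add: col_append_rows scalar_prod_append[of _ a _ b])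
  also have "\<dots> = (transpose_mat P *\<^sub>v v + transpose_mat Q *\<^sub>v w) $ j"
    using P Q j by simp
  finally show "(transpose_mat (P @\<^sub>r Q) *\<^sub>v (v @\<^sub>v w)) $ j = (transpose_mat P *\<^sub>v v + transpose_mat Q *\<^sub>v w) $ j" .
qed (use P Q in \<open>simp add: append_rows_def\<close>)

lemma (in vec_space) span_cols_full_rank:
  assumes A: "A \<in> carrier_mat n nc" and rank: "rank A = n"
  shows "span (set (cols A)) = carrier_vec n"
proof -
  have cols: "set (cols A) \<subseteq> carrier_vec n" using A cols_dim by blast
  obtain S where S: "maximal S (\<lambda>T. T \<subseteq> set (cols A) \<and> lin_indpt T)"
    using maximal_exists[of "\<lambda>T. T \<subseteq> set (cols A) \<and> lin_indpt T" "card (set (cols A))" "{}"]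
    by (meson List.finite_set card_mono empty_iff empty_subsetI finite_lin_indpt2 rev_finite_subset)
  then have S_cols: "S \<subseteq> set (cols A)" and "lin_indpt S" unfolding maximal_def by auto
  moreover have "card S = n" using rank_card_indpt[OF A S] rank by simp
  moreover have "finite S" using S_cols finite_subset by blast
  ultimately have "basis S"
    using dim_li_is_basis[OF fin_dim] cols dim_is_n by auto
  then have "carrier_vec n \<subseteq> span (set (cols A))"
    using span_is_monotone[OF S_cols] unfolding basis_def by simp
  then show ?thesis using span_closed[OF cols] by blast
qed

lemma orthogonal_cols_full_rank_eq_0:
  fixes D :: "real mat" and r :: "real vec"
  assumes D: "D \<in> carrier_mat m K" and rank: "vec_space.rank m D = m"
    and r: "r \<in> carrier_vec m" and orth: "\<And>k. k < K \<Longrightarrow> r \<bullet> col D k = 0"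
  shows "r = 0\<^sub>v m"
proof -
  interpret vec_space "TYPE(real)" m .
  have cols: "set (cols D) \<subseteq> carrier_vec m" using D cols_dim by blast
  have "r \<in> orthogonal_complement (set (cols D))"
    using r orth D unfolding orthogonal_complement_def by (auto simp: cols_def)
  then have "r \<in> orthogonal_complement (carrier_vec m)"
    using span_cols_full_rank[OF D rank] in_orthogonal_complement_span[OF cols] by simp
  then have "r \<bullet> r = 0" using r unfolding orthogonal_complement_def by blast
  then show ?thesis using conjugate_square_eq_0_vec[OF r] by simp
qed

lemma full_row_rank_mult_eq_0:
  fixes E D :: "real mat"
  assumes D: "D \<in> carrier_mat m K" and rank: "vec_space.rank m D = m"
    and E: "E \<in> carrier_mat n m" and ED: "E * D = 0\<^sub>m n K"
  shows "E = 0\<^sub>m n m"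
proof (rule eq_rowI)
  fix i
  assume "i < dim_row (0\<^sub>m n m :: real mat)"
  then have i: "i < n" by simp
  have "row E i \<bullet> col D k = 0" if "k < K" for k
    using arg_cong[OF ED, of "\<lambda>M. M $$ (i, k)"] i that D E by simp
  then have "row E i = 0\<^sub>v m"
    by (rule orthogonal_cols_full_rank_eq_0[OF D rank, rotated]) (use E i in auto)
  then show "row E i = row (0\<^sub>m n m) i" using i by simp
qed (use E in auto)

lemma frob_sq_nonneg: "0 \<le> frob_sq M"
  unfolding frob_sq_def by (intro sum_nonneg) simp

lemma frob_sq_eq_0_iff: "frob_sq M = 0 \<longleftrightarrow> M = 0\<^sub>m (dim_row M) (dim_col M)"
proof
  assume "frob_sq M = 0"
  then have "\<forall>i<dim_row M. \<forall>j<dim_col M. (M $$ (i, j))\<^sup>2 = 0"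
    unfolding frob_sq_def by (simp add: sum_nonneg_eq_0_iff sum_nonneg)
  then show "M = 0\<^sub>m (dim_row M) (dim_col M)" by (intro eq_matI) auto
next
  assume "M = 0\<^sub>m (dim_row M) (dim_col M)"
  then have "M $$ (i, j) = 0" if "i < dim_row M" "j < dim_col M" for i j
    using that by (metis index_zero_mat(1))
  then show "frob_sq M = 0" by (simp add: frob_sq_def)
qed

lemma mult_mat_of_cols:
  assumes "A \<in> carrier_mat n m" "set vs \<subseteq> carrier_vec m"
  shows "A * mat_of_cols m vs = mat_of_cols n (map (\<lambda>v. A *\<^sub>v v) vs)"
proof -
  have "col (mat_of_cols m vs) j = vs ! j" if "j < length vs" for j
    using assms that by (simp add: subset_iff)
  then show ?thesis
    using assms by (intro eq_matI) (auto simp: mat_of_cols_index)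
qed

lemma minus_mat_eq_0_iff:
  fixes A B :: "'a :: ab_group_add mat"
  assumes A: "A \<in> carrier_mat n m" and B: "B \<in> carrier_mat n m"
  shows "A - B = 0\<^sub>m n m \<longleftrightarrow> A = B"
proof
  assume diff: "A - B = 0\<^sub>m n m"
  show "A = B"
  proof (rule eq_matI)
    fix i j
    assume ij: "i < dim_row B" "j < dim_col B"
    then have "(A - B) $$ (i, j) = 0" using B diff by simp
    then show "A $$ (i, j) = B $$ (i, j)" using A B ij by simp
  qed (use A B in auto)
qed (use B in simp)

lemma least_squares_exact_fit_unique:
  fixes D Ostar Y :: "real mat"
  assumes D: "D \<in> carrier_mat m K" and rank: "vec_space.rank m D = m"
    and Ostar: "Ostar \<in> carrier_mat n m" and Y: "Y = Ostar * D"
  defines "obj \<equiv> \<lambda>Oh. frob_sq (transpose_mat D * transpose_mat Oh - transpose_mat Y)"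
  shows "{Oh \<in> carrier_mat n m. \<forall>Oh' \<in> carrier_mat n m. obj Oh \<le> obj Oh'} = {Ostar}
    \<and> obj Ostar = 0"
proof -
  have residual: "transpose_mat D * transpose_mat Oh - transpose_mat Y = transpose_mat ((Oh - Ostar) * D)"
    if Oh: "Oh \<in> carrier_mat n m" for Oh
  proof -
    have "transpose_mat ((Oh - Ostar) * D) = transpose_mat (Oh * D - Y)"
      using Oh Ostar D unfolding Y by (simp add: minus_mult_distrib_mat)
    also have "\<dots> = transpose_mat (Oh * D) - transpose_mat Y"
      using Oh Ostar D unfolding Y by (intro transpose_minus) auto
    finally show ?thesis
      using Oh D by (simp add: transpose_mult)
  qed
  have obj_eq_0_iff: "obj Oh = 0 \<longleftrightarrow> Oh = Ostar" if Oh: "Oh \<in> carrier_mat n m" for Oh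
  proof -
    have "obj Oh = 0 \<longleftrightarrow> transpose_mat ((Oh - Ostar) * D) = transpose_mat (0\<^sub>m n K)"
      using D Oh Ostar unfolding obj_def residual[OF Oh] frob_sq_eq_0_iff by simp
    also have "\<dots> \<longleftrightarrow> (Oh - Ostar) * D = 0\<^sub>m n K"
      by (rule transpose_mat_eq)
    also have "\<dots> \<longleftrightarrow> Oh - Ostar = 0\<^sub>m n m"
      using full_row_rank_mult_eq_0[OF D rank, of "Oh - Ostar" n] minus_carrier_mat[OF Ostar] D by auto
    also have "\<dots> \<longleftrightarrow> Oh = Ostar"
      by (rule minus_mat_eq_0_iff[OF Oh Ostar])
    finally show ?thesis .
  qed
  have obj_nonneg: "0 \<le> obj Oh" for Oh
    unfolding obj_def by (rule frob_sq_nonneg)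
  have obj_Ostar: "obj Ostar = 0" using obj_eq_0_iff[OF Ostar] by simp
  have minimal_obj_eq_0: "obj Oh = 0" if "\<forall>Oh' \<in> carrier_mat n m. obj Oh \<le> obj Oh'" for Oh
    using that Ostar obj_Ostar obj_nonneg[of Oh] by force
  have "Oh \<in> carrier_mat n m \<and> (\<forall>Oh' \<in> carrier_mat n m. obj Oh \<le> obj Oh') \<longleftrightarrow> Oh = Ostar" for Oh
    using minimal_obj_eq_0 obj_eq_0_iff obj_nonneg obj_Ostar Ostar by metis
  then show ?thesis
    using obj_Ostar by auto
qed

lemma foldr_add_carrier_vec:
  "(\<And>i. i \<in> set xs \<Longrightarrow> f i \<in> carrier_vec N) \<Longrightarrow> b \<in> carrier_vec N
    \<Longrightarrow> foldr (\<lambda>i acc. f i + acc) xs b \<in> carrier_vec N"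
  by (induction xs) auto

lemma mult_mat_vec_foldr_add:
  assumes W: "W \<in> carrier_mat m N" and f: "\<And>i. i \<in> set xs \<Longrightarrow> f i \<in> carrier_vec N"
    and b: "b \<in> carrier_vec N"
  shows "W *\<^sub>v foldr (\<lambda>i acc. f i + acc) xs b = foldr (\<lambda>i acc. W *\<^sub>v f i + acc) xs (W *\<^sub>v b)"
  using f
proof (induction xs)
  case (Cons i xs)
  have "foldr (\<lambda>i acc. f i + acc) xs b \<in> carrier_vec N"
    using Cons.prems b by (intro foldr_add_carrier_vec) auto
  then show ?case
    using Cons W by (simp add: mult_add_distrib_mat_vec[OF W])
qed simp

lemma sysf_galerkin_projection:
  assumes V: "V \<in> carrier_mat N n" and B: "B \<in> carrier_mat N p"
    and A: "\<And>i. i \<in> {1..l} \<Longrightarrow> dim_row (A i) = N"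
    and At: "\<And>i. i \<in> {1..l} \<Longrightarrow> At i *\<^sub>v vpow y i = transpose_mat V *\<^sub>v (A i *\<^sub>v vpow (V *\<^sub>v y) i)"
    and u: "u \<in> carrier_vec p"
  shows "transpose_mat V *\<^sub>v sysf A B l (V *\<^sub>v y) u = sysf At (transpose_mat V * B) l y u"
proof -
  have "transpose_mat V *\<^sub>v sysf A B l (V *\<^sub>v y) u
      = foldr (\<lambda>i acc. transpose_mat V *\<^sub>v (A i *\<^sub>v vpow (V *\<^sub>v y) i) + acc) [1..<l+1]
          (transpose_mat V *\<^sub>v (B *\<^sub>v u))"
    unfolding sysf_def
  proof (rule mult_mat_vec_foldr_add)
    show "transpose_mat V \<in> carrier_mat n N" using V by simp
    show "A i *\<^sub>v vpow (V *\<^sub>v y) i \<in> carrier_vec N" if "i \<in> set [1..<l+1]" for i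
    proof -
      have "i \<in> {1..l}" using that by auto
      then show ?thesis using A by (intro carrier_vecI) simp
    qed
    show "B *\<^sub>v u \<in> carrier_vec N" using B by (intro carrier_vecI) simp
  qed
  also have "\<dots> = sysf At (transpose_mat V * B) l y u"
    unfolding sysf_def
  proof (rule foldr_cong)
    show "transpose_mat V *\<^sub>v (B *\<^sub>v u) = (transpose_mat V * B) *\<^sub>v u"
      using V B u by (intro assoc_mult_mat_vec[symmetric]) auto
    show "transpose_mat V *\<^sub>v (A i *\<^sub>v vpow (V *\<^sub>v y) i) + acc = At i *\<^sub>v vpow y i + acc"
      if "i \<in> set [1..<l+1]" for i acc
    proof -
      have "i \<in> {1..l}" using that by auto
      then show ?thesis using At by simp
    qed
  qed simp
  finally show ?thesis .
qed

lemma datacol_foldr_carrier: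
  "x \<in> carrier_vec n \<Longrightarrow> u \<in> carrier_vec p
    \<Longrightarrow> foldr (\<lambda>i acc. vpow x i @\<^sub>v acc) xs u \<in> carrier_vec ((\<Sum>i\<leftarrow>xs. (n + i - 1) choose i) + p)"
proof (induction xs)
  case (Cons i xs)
  then have "vpow x i @\<^sub>v foldr (\<lambda>i acc. vpow x i @\<^sub>v acc) xs u
      \<in> carrier_vec (((n + i - 1) choose i) + ((\<Sum>i\<leftarrow>xs. (n + i - 1) choose i) + p))"
    by (intro append_carrier_vec vpow_carrier)
  then show ?case by (simp add: add.assoc)
qed simp

lemma hcat_foldr_carrier:
  "(\<And>i. i \<in> set xs \<Longrightarrow> At i \<in> carrier_mat n ((n + i - 1) choose i)) \<Longrightarrow> C \<in> carrier_mat n p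
    \<Longrightarrow> foldr (\<lambda>i acc. transpose_mat (At i) @\<^sub>r acc) xs (transpose_mat C)
        \<in> carrier_mat ((\<Sum>i\<leftarrow>xs. (n + i - 1) choose i) + p) n"
  by (induction xs) (auto simp: add.assoc)

lemma hcat_foldr_mult_datacol_foldr:
  assumes At: "\<And>i. i \<in> set xs \<Longrightarrow> At i \<in> carrier_mat n ((n + i - 1) choose i)"
    and C: "C \<in> carrier_mat n p" and x: "x \<in> carrier_vec n" and u: "u \<in> carrier_vec p"
  shows "transpose_mat (foldr (\<lambda>i acc. transpose_mat (At i) @\<^sub>r acc) xs (transpose_mat C))
      *\<^sub>v foldr (\<lambda>i acc. vpow x i @\<^sub>v acc) xs u
    = foldr (\<lambda>i acc. At i *\<^sub>v vpow x i + acc) xs (C *\<^sub>v u)"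
  using At
proof (induction xs)
  case (Cons i xs)
  have Ai: "transpose_mat (At i) \<in> carrier_mat ((n + i - 1) choose i) n"
    using Cons.prems by simp
  have R: "foldr (\<lambda>i acc. transpose_mat (At i) @\<^sub>r acc) xs (transpose_mat C)
      \<in> carrier_mat ((\<Sum>i\<leftarrow>xs. (n + i - 1) choose i) + p) n"
    using Cons.prems C by (intro hcat_foldr_carrier) auto
  have IH: "transpose_mat (foldr (\<lambda>i acc. transpose_mat (At i) @\<^sub>r acc) xs (transpose_mat C))
      *\<^sub>v foldr (\<lambda>i acc. vpow x i @\<^sub>v acc) xs u
    = foldr (\<lambda>i acc. At i *\<^sub>v vpow x i + acc) xs (C *\<^sub>v u)"
    using Cons by simp
  show ?case
    using transpose_append_rows_mult_vec[OF Ai R vpow_carrier[OF x] datacol_foldr_carrier[OF x u]]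
    by (simp only: foldr.simps comp_def IH transpose_transpose)
qed (use C u in simp)

lemma sum_list_upt_eq_sum_atLeastAtMost: "(\<Sum>i\<leftarrow>[1..<l+1]. f i) = (\<Sum>i=1..l. f i)"
  by (simp only: interv_sum_list_conv_sum_set_nat set_upt) (simp add: atLeastLessThanSuc_atLeastAtMost)

lemma datacol_carrier:
  "x \<in> carrier_vec n \<Longrightarrow> u \<in> carrier_vec p
    \<Longrightarrow> datacol l x u \<in> carrier_vec (p + (\<Sum>i=1..l. (n + i - 1) choose i))"
  using datacol_foldr_carrier[of x n u p "[1..<l+1]"]
  unfolding datacol_def sum_list_upt_eq_sum_atLeastAtMost by (simp only: add.commute)

lemma hcat_carrier:
  "(\<And>i. i \<in> {1..l} \<Longrightarrow> At i \<in> carrier_mat n ((n + i - 1) choose i)) \<Longrightarrow> C \<in> carrier_mat n p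
    \<Longrightarrow> hcat At l C \<in> carrier_mat n (p + (\<Sum>i=1..l. (n + i - 1) choose i))"
  using hcat_foldr_carrier[of "[1..<l+1]" At n C p]
  unfolding hcat_def sum_list_upt_eq_sum_atLeastAtMost set_upt by (simp add: add.commute)

lemma hcat_mult_datacol:
  assumes "\<And>i. i \<in> {1..l} \<Longrightarrow> At i \<in> carrier_mat n ((n + i - 1) choose i)"
    and "C \<in> carrier_mat n p" "x \<in> carrier_vec n" "u \<in> carrier_vec p"
  shows "hcat At l C *\<^sub>v datacol l x u = sysf At C l x u"
  unfolding hcat_def datacol_def sysf_def
  by (rule hcat_foldr_mult_datacol_foldr) (use assms in auto)

theorem corollary3p2:
  fixes N n p l K :: nat
    and A :: "nat \<Rightarrow> real mat" and B V :: "real mat"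
    and At :: "nat \<Rightarrow> real mat"
    and x0 :: "real vec" and u xb :: "nat \<Rightarrow> real vec"
  assumes nN: "n \<le> N"
    and A_dim: "\<And>i. i \<in> {1..l} \<Longrightarrow> A i \<in> carrier_mat N ((N + i - 1) choose i)"
    and B_dim: "B \<in> carrier_mat N p"
    and V_dim: "V \<in> carrier_mat N n"
    and V_orth: "transpose_mat V * V = 1\<^sub>m n"
    and At_dim: "\<And>i. i \<in> {1..l} \<Longrightarrow> At i \<in> carrier_mat n ((n + i - 1) choose i)"
    and At_def: "\<And>i y. i \<in> {1..l} \<Longrightarrow> y \<in> carrier_vec n \<Longrightarrow>
                   At i *\<^sub>v vpow y i = transpose_mat V *\<^sub>v (A i *\<^sub>v vpow (V *\<^sub>v y) i)"
    and x0_in: "x0 \<in> carrier_vec N" "\<exists>y \<in> carrier_vec n. x0 = V *\<^sub>v y"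
    and u_dim: "\<And>k. k < K \<Longrightarrow> u k \<in> carrier_vec p"
    and xb0: "xb 0 = transpose_mat V *\<^sub>v x0"
    and xbS: "\<And>k. k < K \<Longrightarrow> xb (Suc k) = transpose_mat V *\<^sub>v sysf A B l (V *\<^sub>v xb k) (u k)"
    and K_ge: "K \<ge> p + (\<Sum>i=1..l. (n + i - 1) choose i)"
    and D_full: "full_rank (mat_of_cols (p + (\<Sum>i=1..l. (n + i - 1) choose i))
                              (map (\<lambda>k. datacol l (xb k) (u k)) [0..<K]))"
  shows "let M = p + (\<Sum>i=1..l. (n + i - 1) choose i);
             D = mat_of_cols M (map (\<lambda>k. datacol l (xb k) (u k)) [0..<K]);
             Y = mat_of_cols n (map (\<lambda>k. xb (Suc k)) [0..<K]);
             obj = (\<lambda>Oh. frob_sq (transpose_mat D * transpose_mat Oh - transpose_mat Y));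
             Ostar = hcat At l (transpose_mat V * B)
         in {Oh \<in> carrier_mat n M. \<forall>Oh' \<in> carrier_mat n M. obj Oh \<le> obj Oh'} = {Ostar}
            \<and> obj Ostar = 0"
proof -
  define M where "M = p + (\<Sum>i=1..l. (n + i - 1) choose i)"
  define D where "D = mat_of_cols M (map (\<lambda>k. datacol l (xb k) (u k)) [0..<K])"
  define Y where "Y = mat_of_cols n (map (\<lambda>k. xb (Suc k)) [0..<K])"
  define Ostar where "Ostar = hcat At l (transpose_mat V * B)"
  have VtB: "transpose_mat V * B \<in> carrier_mat n p" using V_dim B_dim by simp
  have xb_carrier: "xb k \<in> carrier_vec n" if "k \<le> K" for k
    using that xb0 xbS V_dim by (cases k) (auto intro!: carrier_vecI)
  have d_carrier: "datacol l (xb k) (u k) \<in> carrier_vec M" if "k < K" for k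
    unfolding M_def using that xb_carrier u_dim by (intro datacol_carrier) auto
  have Ostar: "Ostar \<in> carrier_mat n M"
    unfolding Ostar_def M_def using At_dim VtB by (rule hcat_carrier)
  have reduced_step: "xb (Suc k) = Ostar *\<^sub>v datacol l (xb k) (u k)" if k: "k < K" for k
  proof -
    have xk: "xb k \<in> carrier_vec n" using k xb_carrier by simp
    have "xb (Suc k) = sysf At (transpose_mat V * B) l (xb k) (u k)"
      unfolding xbS[OF k] using A_dim
      by (intro sysf_galerkin_projection[OF V_dim B_dim _ At_def[OF _ xk] u_dim[OF k]]) auto
    also have "\<dots> = Ostar *\<^sub>v datacol l (xb k) (u k)"
      unfolding Ostar_def using At_dim VtB xk u_dim[OF k] by (intro hcat_mult_datacol[symmetric])
    finally show ?thesis .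
  qed
  have D: "D \<in> carrier_mat M K" unfolding D_def using mat_of_cols_carrier(1) by fastforce
  have Y_cols: "map (\<lambda>k. xb (Suc k)) [0..<K] = map (\<lambda>d. Ostar *\<^sub>v d) (map (\<lambda>k. datacol l (xb k) (u k)) [0..<K])"
    using reduced_step by simp
  have Y: "Y = Ostar * D"
    unfolding Y_def D_def Y_cols by (rule mult_mat_of_cols[OF Ostar, symmetric]) (use d_carrier in auto)
  have rank: "vec_space.rank M D = M"
    using D_full K_ge D unfolding full_rank_def D_def[symmetric] M_def[symmetric] by simp
  show ?thesis
    unfolding Let_def M_def[symmetric] D_def[symmetric] Y_def[symmetric] Ostar_def[symmetric]
    by (rule least_squares_exact_fit_unique[OF D rank Ostar Y])
qed

end
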